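(* Let $(\mathcal A,h,D)$ be an essentially discrete spectral triple, $P_0$ the projection onto $\ker D$, and let $a\in\mathcal A$ be such that the commutator $[|D|,a]$ is bounded. Then (i) $\|[\sqrt{I+D^2},a]\|\le\|[|D|,a]\|+2\|a\|$; (ii) $\|(I-P_0)[\sqrt{I+D^2},a](I-P_0)\|\le C_1(\lambda_1)\,\|[|D|,a]\|$, where $\lambda_1:=\lambda_1(|D|)>0$ is the smallest nonzero eigenvalue of $|D|$ and $C_1(\lambda_1)=\sqrt{1+\lambda_1^{-2}}$.
   Context: A spectral triple $(\mathcal A,h,D)$: $h$ a Hilbert space, $D$ a densely defined self-adjoint operator, $\mathcal A\subseteq B(h)$ a $*$-algebra whose elements preserve the domain of $D$ and have bounded commutators $[D,a]$. Essentially discrete: $\sigma(D)\setminus\{0\}$ is discrete, i.e. $D$ restricted to $(I-P_0)h$ has compact inverse, where $P_0$ is the projection onto $\ker D$ (possibly infinite dimensional). "$[|D|,a]$ is bounded" means $a$ preserves the domain of $|D|$ and the commutator extends to a bounded operator on $h$. *)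

theory Defs
  imports "HOL-Analysis.Analysis"
begin

text \<open>Unbounded operators on a Hilbert space 'h are modelled as a pair of a map
  T :: 'h \<Rightarrow> 'h and its domain V :: 'h set (values of T outside the domain are irrelevant).\<close>

definition densely_defined_linear :: "('h::real_inner \<Rightarrow> 'h) \<Rightarrow> 'h set \<Rightarrow> bool" where
  "densely_defined_linear T V \<longleftrightarrow>
     subspace V \<and> closure V = UNIV \<and>
     (\<forall>x\<in>V. \<forall>y\<in>V. T (x + y) = T x + T y) \<and>
     (\<forall>c. \<forall>x\<in>V. T (c *\<^sub>R x) = c *\<^sub>R T x)"

text \<open>Self-adjointness T = T*: the adjoint's domain is the set of y for which
  x \<mapsto> <T x, y> is represented by some vector z, and then T* y = z.\<close>
definition self_adjoint_op :: "('h::real_inner \<Rightarrow> 'h) \<Rightarrow> 'h set \<Rightarrow> bool" where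
  "self_adjoint_op T V \<longleftrightarrow>
     densely_defined_linear T V \<and>
     (\<forall>y. y \<in> V \<longleftrightarrow> (\<exists>z. \<forall>x\<in>V. inner (T x) y = inner x z)) \<and>
     (\<forall>x\<in>V. \<forall>y\<in>V. inner (T x) y = inner x (T y))"

definition positive_self_adjoint_op :: "('h::real_inner \<Rightarrow> 'h) \<Rightarrow> 'h set \<Rightarrow> bool" where
  "positive_self_adjoint_op T V \<longleftrightarrow>
     self_adjoint_op T V \<and> (\<forall>x\<in>V. inner (T x) x \<ge> 0)"

definition is_pos_sqrt_op ::
  "('h::real_inner \<Rightarrow> 'h) \<Rightarrow> 'h set \<Rightarrow> ('h \<Rightarrow> 'h) \<Rightarrow> 'h set \<Rightarrow> bool" where
  "is_pos_sqrt_op A domA B domB \<longleftrightarrow>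
     positive_self_adjoint_op A domA \<and>
     {x\<in>domA. A x \<in> domA} = domB \<and>
     (\<forall>x\<in>domB. A (A x) = B x)"

definition dom_sq :: "('h \<Rightarrow> 'h) \<Rightarrow> 'h set \<Rightarrow> 'h set" where
  "dom_sq D V = {x\<in>V. D x \<in> V}"

definition is_abs_op :: "('h::real_inner \<Rightarrow> 'h) \<Rightarrow> 'h set \<Rightarrow> ('h \<Rightarrow> 'h) \<Rightarrow> 'h set \<Rightarrow> bool" where
  "is_abs_op D V A domA \<longleftrightarrow> is_pos_sqrt_op A domA (\<lambda>x. D (D x)) (dom_sq D V)"

definition is_sqrt_one_plus_sq :: "('h::real_inner \<Rightarrow> 'h) \<Rightarrow> 'h set \<Rightarrow> ('h \<Rightarrow> 'h) \<Rightarrow> 'h set \<Rightarrow> bool" where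
  "is_sqrt_one_plus_sq D V S domS \<longleftrightarrow> is_pos_sqrt_op S domS (\<lambda>x. x + D (D x)) (dom_sq D V)"

definition is_orth_proj :: "('h::real_inner \<Rightarrow> 'h) \<Rightarrow> 'h set \<Rightarrow> bool" where
  "is_orth_proj P K \<longleftrightarrow> (\<forall>x. P x \<in> K \<and> (\<forall>k\<in>K. inner (x - P x) k = 0))"

definition ker_op :: "('h::real_vector \<Rightarrow> 'h) \<Rightarrow> 'h set \<Rightarrow> 'h set" where
  "ker_op D V = {x\<in>V. D x = 0}"

definition compact_op :: "('h::real_normed_vector \<Rightarrow> 'h) \<Rightarrow> bool" where
  "compact_op T \<longleftrightarrow> bounded_linear T \<and> compact (closure (T ` cball 0 1))"

text \<open>Essentially discrete: D restricted to (I - P0)h (P0 the projection onto ker D)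
  has a compact inverse; the inverse T is extended by 0 on ker D, i.e. T = T (I - P0).\<close>
definition essentially_discrete :: "('h::real_inner \<Rightarrow> 'h) \<Rightarrow> 'h set \<Rightarrow> ('h \<Rightarrow> 'h) \<Rightarrow> bool" where
  "essentially_discrete D V P0 \<longleftrightarrow>
     (\<exists>T. compact_op T \<and>
        (\<forall>x. T x \<in> V \<and> P0 (T x) = 0 \<and> D (T x) = x - P0 x \<and> T (P0 x) = 0) \<and>
        (\<forall>y\<in>V. P0 y = 0 \<longrightarrow> T (D y) = y))"

end

(*
  Because D has a compact inverse on the orthogonal complement of its kernel, the spectral
  theorem for compact symmetric operators yields an orthonormal eigenbasis U of that complement,
  D u = mu_u u.  In this basis |D| and S = sqrt(I + D^2) are diagonal, with eigenvalues |mu_u| and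
  sqrt(1 + mu_u^2) (and 0 resp. 1 on ker D).  Hence H = S - |D| is a bounded operator with
  eigenvalues h(mu) = sqrt(1 + mu^2) - |mu| in [0, 1], and H = (S + |D|)^-1.

  (i) follows from [S, a] = [|D|, a] + [H, a] and norm H <= 1.
  (ii) Since H inverts S + |D|, the commutator X = [S, a] satisfies X = B - H (X + B) H with
  B = [|D|, a].  Compressing by I - P0, on whose range H has norm at most h = h(lambda_1) < 1, the
  norm N of the compression satisfies N <= norm B + h^2 (N + norm B), and
  (1 + h^2) / (1 - h^2) = sqrt(1 + 1 / lambda_1^2).
*)
theory Submission
  imports Defs
begin

section \<open>Orthonormal families\<close>

definition orthonormal :: "'a::real_inner set \<Rightarrow> bool" where
  "orthonormal U \<longleftrightarrow> (\<forall>u\<in>U. inner u u = 1) \<and> (\<forall>u\<in>U. \<forall>v\<in>U. u \<noteq> v \<longrightarrow> inner u v = 0)"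

lemma inner_sum_orthonormal:
  assumes "orthonormal U" "finite F" "F \<subseteq> U" "v \<in> U"
  shows "inner (\<Sum>u\<in>F. c u *\<^sub>R u) v = (if v \<in> F then c v else 0)"
proof -
  have "inner (\<Sum>u\<in>F. c u *\<^sub>R u) v = (\<Sum>u\<in>F. c u * inner u v)"
    by (simp add: inner_sum_left)
  also have "\<dots> = (\<Sum>u\<in>F. if u = v then c v else 0)"
    using assms unfolding orthonormal_def by (intro sum.cong) auto
  also have "\<dots> = (if v \<in> F then c v else 0)"
    using assms(2) by simp
  finally show ?thesis .
qed

lemma norm_sum_orthonormal:
  assumes "orthonormal U" "finite F" "F \<subseteq> U"
  shows "(norm (\<Sum>u\<in>F. c u *\<^sub>R u))\<^sup>2 = (\<Sum>u\<in>F. (c u)\<^sup>2)"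
proof -
  have "(norm (\<Sum>u\<in>F. c u *\<^sub>R u))\<^sup>2 = (\<Sum>v\<in>F. c v * inner (\<Sum>u\<in>F. c u *\<^sub>R u) v)"
    by (simp add: power2_norm_eq_inner inner_sum_right)
  also have "\<dots> = (\<Sum>v\<in>F. (c v)\<^sup>2)"
    using assms inner_sum_orthonormal[OF assms] by (intro sum.cong) (auto simp: power2_eq_square)
  finally show ?thesis .
qed

lemma bessel_inequality_finite:
  assumes "orthonormal U" "finite F" "F \<subseteq> U"
  shows "(\<Sum>u\<in>F. (inner x u)\<^sup>2) \<le> (norm x)\<^sup>2"
proof -
  define p where "p = (\<Sum>u\<in>F. inner x u *\<^sub>R u)"
  have "(norm p)\<^sup>2 = (\<Sum>u\<in>F. (inner x u)\<^sup>2)"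
    unfolding p_def by (rule norm_sum_orthonormal[OF assms])
  moreover have "inner x p = (\<Sum>u\<in>F. (inner x u)\<^sup>2)"
    unfolding p_def by (simp add: inner_sum_right power2_eq_square)
  moreover have "(norm (x - p))\<^sup>2 = (norm x)\<^sup>2 - 2 * inner x p + (norm p)\<^sup>2"
    by (simp add: power2_norm_eq_inner inner_diff_left inner_diff_right inner_commute)
  ultimately show ?thesis
    using zero_le_power2[of "norm (x - p)"] by linarith
qed

lemma bessel_summable:
  assumes "orthonormal U"
  shows "(\<lambda>u. (inner x u)\<^sup>2) summable_on U"
  by (rule nonneg_bdd_above_summable_on)
    (use bessel_inequality_finite[OF assms] in \<open>auto intro!: bdd_aboveI\<close>)

lemma summable_on_if_norm_sq_dominated:
  fixes f :: "'a \<Rightarrow> 'b::{real_normed_vector, complete_space}"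
  assumes g: "g summable_on A"
    and dom: "\<And>F. finite F \<Longrightarrow> F \<subseteq> A \<Longrightarrow> (norm (sum f F))\<^sup>2 \<le> sum g F"
  shows "f summable_on A"
proof -
  from g obtain L where lim: "(sum g \<longlongrightarrow> L) (finite_subsets_at_top A)"
    unfolding has_sum_def summable_on_def by blast
  have "\<exists>P. eventually P (finite_subsets_at_top A) \<and>
              (\<forall>F F'. P F \<and> P F' \<longrightarrow> dist (sum f F) (sum f F') < e)" if "e > 0" for e
  proof -
    define d P where "d = e\<^sup>2/8" and "P F \<longleftrightarrow> finite F \<and> F \<subseteq> A \<and> dist (sum g F) L < d" for F
    have "d > 0" using that by (simp add: d_def)
    have ev_P: "eventually P (finite_subsets_at_top A)"
      using lim by (auto simp add: P_def[abs_def] \<open>0 < d\<close> eventually_conj_iff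
          eventually_finite_subsets_at_top_weakI tendsto_iff)
    moreover have "dist (sum f F1) (sum f F2) < e" if "P F1" and "P F2" for F1 F2
    proof -
      from ev_P obtain F' where "finite F'" and "F' \<subseteq> A"
        and P_sup_F': "finite F \<and> F \<supseteq> F' \<and> F \<subseteq> A \<Longrightarrow> P F" for F
        by atomize_elim (simp add: eventually_finite_subsets_at_top)
      define F where "F = F' \<union> F1 \<union> F2"
      have "finite F" and "F \<subseteq> A"
        using F_def P_def[abs_def] that \<open>finite F'\<close> \<open>F' \<subseteq> A\<close> by auto
      have dist_F: "dist (sum g F) L < d"
        by (metis F_def \<open>F \<subseteq> A\<close> P_def P_sup_F' \<open>finite F\<close> le_supE order_refl)
      have dist_F_subset: "dist (sum f F) (sum f F'') < sqrt (2*d)" if F'': "F'' \<subseteq> F" "P F''" for F''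
      proof -
        have fin: "finite (F - F'')" "F - F'' \<subseteq> A" using \<open>finite F\<close> \<open>F \<subseteq> A\<close> by auto
        have "dist (sum f F) (sum f F'') = norm (sum f (F - F''))"
          unfolding dist_norm using \<open>finite F\<close> F'' by (subst sum_diff) auto
        also have "\<dots> \<le> sqrt (sum g (F - F''))"
          using dom[OF fin] real_le_rsqrt by blast
        also have "sum g (F - F'') = sum g F - sum g F''"
          using \<open>finite F\<close> F'' by (subst sum_diff) auto
        also have "sqrt (sum g F - sum g F'') < sqrt (2*d)"
          using dist_F F'' unfolding P_def dist_real_def by (intro real_sqrt_less_mono) linarith
        finally show ?thesis .
      qed
      have "dist (sum f F1) (sum f F2) \<le> dist (sum f F) (sum f F1) + dist (sum f F) (sum f F2)"
        by (rule dist_triangle3)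
      also have "\<dots> < sqrt (2*d) + sqrt (2*d)"
        by (intro add_strict_mono dist_F_subset that) (auto simp: F_def)
      also have "sqrt (2*d) = e/2"
        using \<open>e > 0\<close> unfolding d_def by (simp add: real_sqrt_divide power2_eq_square real_sqrt_mult)
      finally show ?thesis by simp
    qed
    ultimately show ?thesis by blast
  qed
  then have "cauchy_filter (filtermap (sum f) (finite_subsets_at_top A))"
    by (simp add: cauchy_filter_metric_filtermap)
  moreover have "complete (UNIV::'b set)"
    by (meson Cauchy_convergent UNIV_I complete_def convergent_def)
  ultimately obtain L' where "(sum f \<longlongrightarrow> L') (finite_subsets_at_top A)"
    using complete_uniform[where S=UNIV] by (force simp add: filterlim_def)
  then show ?thesis
    using summable_on_def has_sum_def by blast
qed

lemma orthonormal_series_summable: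
  fixes U :: "'a::{real_inner, complete_space} set"
  assumes "orthonormal U" "(\<lambda>u. (c u)\<^sup>2) summable_on U"
  shows "(\<lambda>u. c u *\<^sub>R u) summable_on U"
proof (rule summable_on_if_norm_sq_dominated[OF assms(2)])
  fix F assume "finite F" "F \<subseteq> U"
  then show "(norm (\<Sum>u\<in>F. c u *\<^sub>R u))\<^sup>2 \<le> (\<Sum>u\<in>F. (c u)\<^sup>2)"
    using norm_sum_orthonormal[OF assms(1)] by simp
qed

lemma has_sum_inner_orthonormal_series:
  fixes U :: "'a::{real_inner, complete_space} set"
  assumes "orthonormal U" "(\<lambda>u. (c u)\<^sup>2) summable_on U"
  shows "((\<lambda>u. c u * inner u w) has_sum inner (\<Sum>\<^sub>\<infinity>u\<in>U. c u *\<^sub>R u) w) U"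
proof -
  have "((\<lambda>u. inner (c u *\<^sub>R u) w) has_sum inner (\<Sum>\<^sub>\<infinity>u\<in>U. c u *\<^sub>R u) w) U"
    using has_sum_bounded_linear[OF bounded_linear_inner_left
        orthonormal_series_summable[OF assms, unfolded summable_iff_has_sum_infsum]] .
  then show ?thesis by simp
qed

lemma inner_orthonormal_series:
  fixes U :: "'a::{real_inner, complete_space} set"
  assumes "orthonormal U" "(\<lambda>u. (c u)\<^sup>2) summable_on U" "v \<in> U"
  shows "inner (\<Sum>\<^sub>\<infinity>u\<in>U. c u *\<^sub>R u) v = c v"
proof -
  have "((\<lambda>u. c u * inner u v) has_sum (\<Sum>u\<in>{v}. c u * inner u v)) {v}"
    by (rule has_sum_finite) simp
  then have "((\<lambda>u. c u * inner u v) has_sum c v) {v}"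
    using assms(1,3) by (simp add: orthonormal_def)
  then have "((\<lambda>u. c u * inner u v) has_sum c v) U"
    by (rule has_sum_cong_neutral[THEN iffD1, rotated -1])
      (use assms(1,3) in \<open>auto simp: orthonormal_def\<close>)
  then show ?thesis
    using has_sum_inner_orthonormal_series[OF assms(1,2)] has_sum_unique by blast
qed

lemma inner_orthonormal_series_orthogonal:
  fixes U :: "'a::{real_inner, complete_space} set"
  assumes "orthonormal U" "(\<lambda>u. (c u)\<^sup>2) summable_on U" "\<forall>u\<in>U. inner u w = 0"
  shows "inner (\<Sum>\<^sub>\<infinity>u\<in>U. c u *\<^sub>R u) w = 0"
proof -
  have "((\<lambda>u. c u * inner u w) has_sum 0) U"
    using assms(3) by (intro has_sum_0) simp
  then show ?thesis
    using has_sum_inner_orthonormal_series[OF assms(1,2)] has_sum_unique by blast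
qed

lemma exists_maximal_orthonormal_subset:
  obtains U where "U \<subseteq> E" "orthonormal U"
    "\<And>U'. orthonormal U' \<Longrightarrow> U' \<subseteq> E \<Longrightarrow> U \<subseteq> U' \<Longrightarrow> U' = U"
proof -
  define A where "A = {U. orthonormal U \<and> U \<subseteq> E}"
  have "\<Union>C \<in> A" if C: "C \<in> chains A" for C
  proof -
    have CA: "C \<subseteq> A" and ch: "\<And>X Y. X \<in> C \<Longrightarrow> Y \<in> C \<Longrightarrow> X \<subseteq> Y \<or> Y \<subseteq> X"
      using C unfolding chains_def chain_subset_def by auto
    have "inner u v = 0" if uv: "u \<in> \<Union>C" "v \<in> \<Union>C" "u \<noteq> v" for u v
    proof -
      obtain X Y where XY: "X \<in> C" "u \<in> X" "Y \<in> C" "v \<in> Y" using uv by blast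
      then have "u \<in> X \<union> Y" "v \<in> X \<union> Y" "X \<union> Y \<in> C"
        using ch[OF XY(1) XY(3)] by (auto simp: sup_absorb1 sup_absorb2)
      then show ?thesis using CA uv(3) unfolding A_def orthonormal_def by blast
    qed
    moreover have "inner u u = 1" if "u \<in> \<Union>C" for u
      using that CA unfolding A_def orthonormal_def by blast
    moreover have "\<Union>C \<subseteq> E" using CA unfolding A_def by blast
    ultimately show ?thesis unfolding A_def orthonormal_def by blast
  qed
  then obtain M where M: "M \<in> A" "\<forall>X\<in>A. M \<subseteq> X \<longrightarrow> X = M"
    using Zorn_Lemma by blast
  show ?thesis
  proof (rule that)
    show "M \<subseteq> E" "orthonormal M" using M(1) unfolding A_def by auto
    show "U' = M" if "orthonormal U'" "U' \<subseteq> E" "M \<subseteq> U'" for U'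
      using M(2) that unfolding A_def by blast
  qed
qed

section \<open>Eigenvectors of compact symmetric operators\<close>

lemma symmetric_sq_defect_bound:
  fixes T :: "'a::real_inner \<Rightarrow> 'a"
  assumes sym: "\<And>x y. inner (T x) y = inner x (T y)"
    and TT: "(norm (T (T y)))\<^sup>2 \<le> M * (norm (T y))\<^sup>2" and y: "norm y \<le> 1" and M: "0 \<le> M"
  shows "(norm (T (T y) - M *\<^sub>R y))\<^sup>2 \<le> M * (M - (norm (T y))\<^sup>2)"
proof -
  have "inner (T (T y)) y = (norm (T y))\<^sup>2"
    by (simp add: sym power2_norm_eq_inner)
  moreover have "M\<^sup>2 * (norm y)\<^sup>2 \<le> M\<^sup>2"
    using y by (simp add: mult_left_le power_le_one)
  moreover have "(norm (T (T y) - M *\<^sub>R y))\<^sup>2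
      = (norm (T (T y)))\<^sup>2 - 2 * M * inner (T (T y)) y + M\<^sup>2 * (norm y)\<^sup>2"
    unfolding power2_norm_eq_inner
    by (simp add: inner_commute algebra_simps power2_eq_square)
  ultimately show ?thesis
    using TT by (simp add: power2_eq_square algebra_simps)
qed

lemma eigenvector_of_approximate_eigensequence:
  fixes T :: "'a::real_normed_vector \<Rightarrow> 'a"
  assumes T: "bounded_linear T" and W: "closed W" "\<And>n. y n \<in> W"
    and lim: "(\<lambda>n. T (y n)) \<longlonglongrightarrow> l" and defect: "(\<lambda>n. T (T (y n)) - M *\<^sub>R y n) \<longlonglongrightarrow> 0"
    and M: "M \<noteq> 0"
  shows "\<exists>v\<in>W. T v = l \<and> T l = M *\<^sub>R v"
proof -
  interpret T: bounded_linear T by fact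
  have "(\<lambda>n. T (T (y n)) - (T (T (y n)) - M *\<^sub>R y n)) \<longlonglongrightarrow> T l - 0"
    by (intro tendsto_diff T.tendsto lim defect)
  then have "(\<lambda>n. (1/M) *\<^sub>R (M *\<^sub>R y n)) \<longlonglongrightarrow> (1/M) *\<^sub>R T l"
    by (intro tendsto_scaleR tendsto_const) simp
  then have ylim: "y \<longlonglongrightarrow> (1/M) *\<^sub>R T l"
    using M by simp
  then have "(\<lambda>n. T (y n)) \<longlonglongrightarrow> T ((1/M) *\<^sub>R T l)"
    by (rule T.tendsto)
  then have "T ((1/M) *\<^sub>R T l) = l"
    using lim LIMSEQ_unique by blast
  moreover have "(1/M) *\<^sub>R T l \<in> W"
    using closed_sequentially[OF W(1) _ ylim] W(2) by blast
  moreover have "T l = M *\<^sub>R ((1/M) *\<^sub>R T l)"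
    using M by simp
  ultimately show ?thesis
    by blast
qed

lemma exists_norm_maximizing_sequence:
  fixes T :: "'a::real_normed_vector \<Rightarrow> 'a"
  assumes T: "bounded_linear T" and W: "subspace W" and w0: "w0 \<in> W" "T w0 \<noteq> 0"
  obtains M x where "0 < M" "\<And>y. y \<in> W \<Longrightarrow> (norm (T y))\<^sup>2 \<le> M * (norm y)\<^sup>2"
    "\<And>n. x n \<in> W" "\<And>n. norm (x n) \<le> 1" "\<And>n. M - 1 / (real n + 1) < (norm (T (x n)))\<^sup>2"
proof -
  interpret T: bounded_linear T by fact
  define SS where "SS = {(norm (T x))\<^sup>2 | x. x \<in> W \<and> norm x \<le> 1}"
  define M where "M = Sup SS"
  have bdd: "bdd_above SS"
  proof (rule bdd_aboveI)
    fix s assume "s \<in> SS"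
    then obtain x where x: "s = (norm (T x))\<^sup>2" "norm x \<le> 1" unfolding SS_def by blast
    have "norm (T x) \<le> onorm T" using onorm[OF T, of x] x(2) onorm_pos_le[OF T]
      by (meson mult_left_le order_trans)
    then show "s \<le> (onorm T)\<^sup>2" using x by (simp add: power_mono)
  qed
  have ne: "SS \<noteq> {}" unfolding SS_def using subspace_0[OF W] by force
  have upper: "(norm (T x))\<^sup>2 \<le> M" if "x \<in> W" "norm x \<le> 1" for x
    unfolding M_def by (rule cSup_upper[OF _ bdd]) (use that in \<open>auto simp: SS_def\<close>)
  have scaled: "(norm (T y))\<^sup>2 \<le> M * (norm y)\<^sup>2" if "y \<in> W" for y
  proof (cases "y = 0")
    case True then show ?thesis using upper[of 0] subspace_0[OF W] by simp
  next
    case False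
    have "(1 / norm y) *\<^sub>R y \<in> W" using W that by (simp add: subspace_scale)
    then have "(norm (T ((1 / norm y) *\<^sub>R y)))\<^sup>2 \<le> M" using upper False by simp
    then have "(norm (T y))\<^sup>2 / (norm y)\<^sup>2 \<le> M" by (simp add: T.scaleR power_divide)
    then show ?thesis using False by (simp add: field_simps)
  qed
  have M: "M > 0"
  proof -
    have "0 < (norm (T w0))\<^sup>2" using w0 by simp
    also have "\<dots> \<le> M * (norm w0)\<^sup>2" using scaled w0 by blast
    finally show ?thesis using zero_le_power2[of "norm w0"] by (auto simp: zero_less_mult_iff)
  qed
  have "\<exists>x. x \<in> W \<and> norm x \<le> 1 \<and> M - 1 / (real n + 1) < (norm (T x))\<^sup>2" for n
  proof -
    have "M - 1 / (real n + 1) < M" by simp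
    then obtain s where "s \<in> SS" "M - 1 / (real n + 1) < s"
      unfolding M_def using less_cSup_iff[OF ne bdd] by blast
    then show ?thesis unfolding SS_def by blast
  qed
  then obtain x where "\<And>n. x n \<in> W" "\<And>n. norm (x n) \<le> 1"
    "\<And>n. M - 1 / (real n + 1) < (norm (T (x n)))\<^sup>2" by metis
  then show ?thesis using that M scaled by blast
qed

lemma compact_symmetric_sq_eigenvector:
  fixes T :: "'a::{real_inner, complete_space} \<Rightarrow> 'a"
  assumes T: "bounded_linear T" and cpt: "compact (closure (T ` cball 0 1))"
    and sym: "\<And>x y. inner (T x) y = inner x (T y)"
    and W: "closed W" "subspace W" and WT: "\<And>x. x \<in> W \<Longrightarrow> T x \<in> W"
    and w0: "w0 \<in> W" "T w0 \<noteq> 0"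
  shows "\<exists>v\<in>W. v \<noteq> 0 \<and> (\<exists>M>0. T (T v) = M *\<^sub>R v)"
proof -
  interpret T: bounded_linear T by fact
  obtain M x where M: "0 < M" and scaled: "\<And>y. y \<in> W \<Longrightarrow> (norm (T y))\<^sup>2 \<le> M * (norm y)\<^sup>2"
    and x: "\<And>n. x n \<in> W" "\<And>n. norm (x n) \<le> 1" "\<And>n. M - 1 / (real n + 1) < (norm (T (x n)))\<^sup>2"
    using exists_norm_maximizing_sequence[OF T W(2) w0] by blast
  have "\<forall>n. T (x n) \<in> closure (T ` cball 0 1)"
    using x(2) closure_subset by (force simp: dist_norm)
  then obtain l r where r: "strict_mono r" and lim: "((\<lambda>n. T (x n)) \<circ> r) \<longlonglongrightarrow> l"
    using cpt unfolding compact_def by metis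
  define y where "y n = x (r n)" for n
  have yW: "y n \<in> W" and yn: "norm (y n) \<le> 1" for n
    unfolding y_def using x by simp_all
  have ylow: "M - 1 / (real n + 1) \<le> (norm (T (y n)))\<^sup>2" for n
  proof -
    have "1 / (real (r n) + 1) \<le> 1 / (real n + 1)"
      using seq_suble[OF r, of n] by (simp add: frac_le)
    then show ?thesis using x(3)[of "r n"] unfolding y_def by linarith
  qed
  have inv0: "(\<lambda>n. 1 / (real n + 1)) \<longlonglongrightarrow> 0"
    using LIMSEQ_inverse_real_of_nat by (simp add: divide_inverse add.commute)
  have limy: "(\<lambda>n. T (y n)) \<longlonglongrightarrow> l"
    using lim by (simp add: y_def comp_def)
  have "(\<lambda>n. norm (T (T (y n)) - M *\<^sub>R y n)) \<longlonglongrightarrow> 0"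
  proof (rule tendsto_sandwich[OF _ _ tendsto_const])
    show "(\<lambda>n. sqrt (M * (1 / (real n + 1)))) \<longlonglongrightarrow> 0"
      using tendsto_real_sqrt[OF tendsto_mult_right_zero[OF inv0, of M]] by simp
    have "(norm (T (T (y n)) - M *\<^sub>R y n))\<^sup>2 \<le> M * (1 / (real n + 1))" for n
    proof -
      have "(norm (T (T (y n)) - M *\<^sub>R y n))\<^sup>2 \<le> M * (M - (norm (T (y n)))\<^sup>2)"
        using symmetric_sq_defect_bound[OF sym scaled[OF WT[OF yW]] yn] M by simp
      also have "\<dots> \<le> M * (1 / (real n + 1))"
        using ylow[of n] M by (intro mult_left_mono) auto
      finally show ?thesis .
    qed
    then show "\<forall>\<^sub>F n in sequentially. norm (T (T (y n)) - M *\<^sub>R y n) \<le> sqrt (M * (1 / (real n + 1)))"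
      by (auto intro!: always_eventually real_le_rsqrt)
  qed simp
  then have "(\<lambda>n. T (T (y n)) - M *\<^sub>R y n) \<longlonglongrightarrow> 0"
    by (rule tendsto_norm_zero_cancel)
  then obtain v where v: "v \<in> W" "T v = l" "T l = M *\<^sub>R v"
    using eigenvector_of_approximate_eigensequence[OF T W(1) yW limy] M by auto
  have "(\<lambda>n. M - 1 / (real n + 1)) \<longlonglongrightarrow> M"
    using tendsto_diff[OF tendsto_const inv0, of M] by simp
  moreover have "(\<lambda>n. (norm (T (y n)))\<^sup>2) \<longlonglongrightarrow> (norm l)\<^sup>2"
    by (intro tendsto_power tendsto_norm limy)
  ultimately have "M \<le> (norm l)\<^sup>2"
    using LIMSEQ_le ylow by blast
  then have "v \<noteq> 0" using M v(2) T.zero by auto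
  then show ?thesis using v M by auto
qed

lemma eigenvector_of_sq_eigenvector:
  assumes T: "linear T" and W: "subspace W" "\<And>x. x \<in> W \<Longrightarrow> T x \<in> W"
    and v: "v \<in> W" "v \<noteq> 0" "T (T v) = M *\<^sub>R v" and M: "M > 0"
  shows "\<exists>w\<in>W. w \<noteq> 0 \<and> (\<exists>t. t \<noteq> 0 \<and> T w = t *\<^sub>R w)"
proof -
  interpret T: linear T by fact
  define s where "s = sqrt M"
  have s: "s > 0" "s * s = M" using M unfolding s_def by auto
  define w where "w = T v + s *\<^sub>R v"
  show ?thesis
  proof (cases "w = 0")
    case True
    then have "T v = (- s) *\<^sub>R v" unfolding w_def by (simp add: eq_neg_iff_add_eq_0)
    moreover have "- s \<noteq> 0" using s by simp
    ultimately show ?thesis using v by blast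
  next
    case False
    have "T w = s *\<^sub>R w"
      unfolding w_def using v(3) s by (simp add: T.add T.scale scaleR_add_right)
    moreover have "w \<in> W" unfolding w_def using W v(1) by (simp add: subspace_add subspace_scale)
    moreover have "s \<noteq> 0" using s by simp
    ultimately show ?thesis using False by blast
  qed
qed

section \<open>The function \<open>m \<mapsto> \<surd>(1 + m\<^sup>2) - |m|\<close>\<close>

lemma abs_le_sqrt_one_plus_sq: "\<bar>m\<bar> \<le> sqrt (1 + m\<^sup>2)"
  by (rule real_le_rsqrt) simp

lemma sqrt_one_plus_sq_minus_abs_nonneg: "0 \<le> sqrt (1 + m\<^sup>2) - \<bar>m\<bar>"
  using abs_le_sqrt_one_plus_sq[of m] by simp

lemma sqrt_one_plus_sq_minus_abs_le_1: "sqrt (1 + m\<^sup>2) - \<bar>m\<bar> \<le> 1"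
proof -
  have "sqrt (1 + m\<^sup>2) \<le> 1 + \<bar>m\<bar>"
    by (rule real_le_lsqrt) (simp_all add: power2_eq_square algebra_simps)
  then show ?thesis by simp
qed

lemma sqrt_one_plus_sq_plus_abs_mult: "(sqrt (1 + m\<^sup>2) + \<bar>m\<bar>) * (sqrt (1 + m\<^sup>2) - \<bar>m\<bar>) = 1"
  by (simp add: algebra_simps power2_eq_square[symmetric])

lemma sqrt_one_plus_sq_mult_minus_abs_le_1: "sqrt (1 + m\<^sup>2) * (sqrt (1 + m\<^sup>2) - \<bar>m\<bar>) \<le> 1"
proof -
  have "\<bar>m\<bar> * (sqrt (1 + m\<^sup>2) - \<bar>m\<bar>) \<ge> 0"
    using sqrt_one_plus_sq_minus_abs_nonneg[of m] by simp
  then show ?thesis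
    using sqrt_one_plus_sq_plus_abs_mult[of m] by (simp add: algebra_simps)
qed

lemma sqrt_one_plus_sq_minus_abs_antimono:
  fixes l m :: real
  assumes l: "0 < l" "l \<le> \<bar>m\<bar>"
  shows "sqrt (1 + m\<^sup>2) - \<bar>m\<bar> \<le> sqrt (1 + l\<^sup>2) - l"
proof -
  have pos: "0 < sqrt (1 + l\<^sup>2) + l" "0 < sqrt (1 + m\<^sup>2) + \<bar>m\<bar>"
    using l by (simp_all add: add_pos_pos add_pos_nonneg)
  have "sqrt (1 + m\<^sup>2) - \<bar>m\<bar> = 1 / (sqrt (1 + m\<^sup>2) + \<bar>m\<bar>)"
    using sqrt_one_plus_sq_plus_abs_mult[of m] pos(2) by (simp add: field_simps)
  moreover have "sqrt (1 + l\<^sup>2) - l = 1 / (sqrt (1 + l\<^sup>2) + l)"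
    using sqrt_one_plus_sq_plus_abs_mult[of l] pos(1) l(1) by (simp add: field_simps)
  moreover have "l\<^sup>2 \<le> \<bar>m\<bar>\<^sup>2"
    using power_mono[OF l(2), of 2] l(1) by simp
  then have "sqrt (1 + l\<^sup>2) + l \<le> sqrt (1 + m\<^sup>2) + \<bar>m\<bar>"
    using l(2) by (simp add: add_mono)
  ultimately show ?thesis
    using pos by (simp add: divide_left_mono)
qed

lemma sqrt_one_plus_sq_minus_less_1:
  fixes l :: real
  assumes "0 < l"
  shows "sqrt (1 + l\<^sup>2) - l < 1"
proof -
  have "sqrt (1 + l\<^sup>2) < 1 + l"
    by (rule real_less_lsqrt) (use assms in \<open>simp_all add: power2_eq_square algebra_simps\<close>)
  then show ?thesis by simp
qed

text \<open>With \<open>h = f - l\<close> and \<open>f = \<surd>(1 + l\<^sup>2)\<close> one has \<open>1 + h\<^sup>2 = 2 f h\<close> and \<open>1 - h\<^sup>2 = 2 l h\<close>.\<close>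
lemma sqrt_one_plus_sq_minus_ratio:
  fixes l :: real
  assumes l: "0 < l"
  defines "h \<equiv> sqrt (1 + l\<^sup>2) - l"
  shows "(1 + h\<^sup>2) / (1 - h\<^sup>2) = sqrt (1 + 1 / l\<^sup>2)"
proof -
  define f where "f = sqrt (1 + l\<^sup>2)"
  have f2: "f\<^sup>2 = 1 + l\<^sup>2" unfolding f_def by simp
  have fl: "l < f" unfolding f_def by (rule real_less_rsqrt) simp
  have h2: "h\<^sup>2 = 1 + 2 * l\<^sup>2 - 2 * f * l" unfolding h_def f_def[symmetric]
    using f2 by (simp add: power2_eq_square algebra_simps)
  have num: "1 + h\<^sup>2 = 2 * f * (f - l)" and den: "1 - h\<^sup>2 = 2 * l * (f - l)"
    using h2 f2 by (simp_all add: power2_eq_square algebra_simps)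
  have "(1 + h\<^sup>2) / (1 - h\<^sup>2) = f / l"
    unfolding num den using fl l by (simp add: field_simps)
  also have "(f / l)\<^sup>2 = 1 + 1 / l\<^sup>2"
    using f2 l by (simp add: field_simps)
  then have "f / l = sqrt (1 + 1 / l\<^sup>2)"
    using fl l by (metis real_sqrt_abs abs_of_nonneg divide_nonneg_pos less_imp_le order_less_trans)
  finally show ?thesis .
qed

section \<open>Self-adjoint operators and orthogonal projections\<close>

lemma self_adjoint_op_subspace: "self_adjoint_op L V \<Longrightarrow> subspace V"
  unfolding self_adjoint_op_def densely_defined_linear_def by blast

lemma self_adjoint_op_add:
  "self_adjoint_op L V \<Longrightarrow> x \<in> V \<Longrightarrow> y \<in> V \<Longrightarrow> L (x + y) = L x + L y"
  unfolding self_adjoint_op_def densely_defined_linear_def by blast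

lemma self_adjoint_op_scaleR: "self_adjoint_op L V \<Longrightarrow> x \<in> V \<Longrightarrow> L (c *\<^sub>R x) = c *\<^sub>R L x"
  unfolding self_adjoint_op_def densely_defined_linear_def by blast

lemma self_adjoint_op_zero: "self_adjoint_op L V \<Longrightarrow> L 0 = 0"
  using self_adjoint_op_scaleR[of L V 0 0] subspace_0[OF self_adjoint_op_subspace] by fastforce

lemma self_adjoint_op_diff:
  assumes "self_adjoint_op L V" "x \<in> V" "y \<in> V"
  shows "L (x - y) = L x - L y"
proof -
  have "(-1) *\<^sub>R y \<in> V"
    using assms self_adjoint_op_subspace subspace_scale by blast
  then have "L (x + (-1) *\<^sub>R y) = L x + L ((-1) *\<^sub>R y)"
    using self_adjoint_op_add[OF assms(1,2)] by blast
  also have "L ((-1) *\<^sub>R y) = (-1) *\<^sub>R L y"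
    using self_adjoint_op_scaleR[OF assms(1,3)] by blast
  finally show ?thesis by simp
qed

lemma self_adjoint_op_symmetric:
  "self_adjoint_op L V \<Longrightarrow> x \<in> V \<Longrightarrow> y \<in> V \<Longrightarrow> inner (L x) y = inner x (L y)"
  unfolding self_adjoint_op_def by blast

lemma self_adjoint_op_domainI:
  "self_adjoint_op L V \<Longrightarrow> (\<And>x. x \<in> V \<Longrightarrow> inner (L x) y = inner x z) \<Longrightarrow> y \<in> V"
  unfolding self_adjoint_op_def by blast

lemma positive_self_adjoint_op_self_adjoint:
  "positive_self_adjoint_op L V \<Longrightarrow> self_adjoint_op L V"
  unfolding positive_self_adjoint_op_def by blast

lemma positive_self_adjoint_op_nonneg:
  "positive_self_adjoint_op L V \<Longrightarrow> x \<in> V \<Longrightarrow> inner (L x) x \<ge> 0"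
  unfolding positive_self_adjoint_op_def by blast

lemma positive_self_adjoint_op_eigenvalue_nonneg:
  assumes "positive_self_adjoint_op L V" "x \<in> V" "x \<noteq> 0" "L x = c *\<^sub>R x"
  shows "c \<ge> 0"
proof -
  have "0 \<le> c * inner x x"
    using positive_self_adjoint_op_nonneg[OF assms(1,2)] assms(4) by simp
  moreover have "inner x x > 0" using assms(3) by simp
  ultimately show ?thesis by (simp add: zero_le_mult_iff)
qed

text \<open>If \<open>L (L x) = m\<^sup>2 x\<close>, then \<open>p = L x - m x\<close> satisfies \<open>L p = -m p\<close>, which positivity
  forbids unless \<open>p = 0\<close>.\<close>
lemma positive_self_adjoint_op_eigen_of_sq:
  assumes L: "positive_self_adjoint_op L V" and x: "x \<in> V" "L x \<in> V"
    and LL: "L (L x) = m\<^sup>2 *\<^sub>R x" and m: "m \<ge> 0"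
  shows "L x = m *\<^sub>R x"
proof (cases "m = 0")
  case True
  have "inner (L x) (L x) = inner (L (L x)) x"
    using self_adjoint_op_symmetric[OF positive_self_adjoint_op_self_adjoint[OF L] x(2) x(1)] by simp
  then show ?thesis using LL True by simp
next
  case False
  have sa: "self_adjoint_op L V" using positive_self_adjoint_op_self_adjoint[OF L] .
  define p where "p = L x - m *\<^sub>R x"
  have mx: "m *\<^sub>R x \<in> V" using x self_adjoint_op_subspace[OF sa] subspace_scale by blast
  have pV: "p \<in> V" unfolding p_def using x mx self_adjoint_op_subspace[OF sa] subspace_diff by blast
  have "L p = L (L x) - m *\<^sub>R L x"
    unfolding p_def using self_adjoint_op_diff[OF sa x(2) mx] self_adjoint_op_scaleR[OF sa x(1)] by simp
  also have "\<dots> = (- m) *\<^sub>R p" unfolding p_def LL by (simp add: power2_eq_square algebra_simps)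
  finally have "L p = (- m) *\<^sub>R p" .
  then have "0 \<le> - m * inner p p" using positive_self_adjoint_op_nonneg[OF L pV] by simp
  then have "inner p p \<le> 0" using False m by (simp add: mult_le_0_iff)
  then have "p = 0" by (metis inner_eq_zero_iff inner_ge_zero order_antisym)
  then show ?thesis unfolding p_def by simp
qed

lemma is_pos_sqrt_op_eigen:
  assumes A: "is_pos_sqrt_op A domA B domB" and x: "x \<in> domB" "B x = m\<^sup>2 *\<^sub>R x" and m: "m \<ge> 0"
  shows "x \<in> domA \<and> A x = m *\<^sub>R x"
proof -
  have psa: "positive_self_adjoint_op A domA" and dom: "x \<in> domA" "A x \<in> domA"
    using A x(1) unfolding is_pos_sqrt_op_def by auto
  have "A (A x) = m\<^sup>2 *\<^sub>R x" using A x unfolding is_pos_sqrt_op_def by auto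
  then show ?thesis using positive_self_adjoint_op_eigen_of_sq[OF psa dom _ m] dom by blast
qed

locale orth_proj =
  fixes P :: "'a::real_inner \<Rightarrow> 'a" and K :: "'a set"
  assumes proj: "is_orth_proj P K" and subspace: "subspace K"
begin

lemma proj_in: "P x \<in> K"
  using proj unfolding is_orth_proj_def by blast

lemma inner_diff_proj: "k \<in> K \<Longrightarrow> inner (x - P x) k = 0"
  using proj unfolding is_orth_proj_def by blast

lemma inner_proj: "k \<in> K \<Longrightarrow> inner (P x) k = inner x k"
  using inner_diff_proj[of k x] by (simp add: inner_diff_left)

lemma proj_eqI: "(\<And>k. k \<in> K \<Longrightarrow> inner x k = inner y k) \<Longrightarrow> P x = P y"
proof -
  assume h: "\<And>k. k \<in> K \<Longrightarrow> inner x k = inner y k"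
  have "P x - P y \<in> K" using proj_in subspace subspace_diff by blast
  moreover have "inner (P x - P y) k = 0" if "k \<in> K" for k
    using h[OF that] inner_proj[OF that] by (simp add: inner_diff_left)
  ultimately show ?thesis by (metis inner_eq_zero_iff eq_iff_diff_eq_0)
qed

lemma proj_fixes:
  assumes "k \<in> K"
  shows "P k = k"
proof -
  have "k - P k \<in> K" using assms proj_in subspace subspace_diff by blast
  then have "inner (k - P k) (k - P k) = 0" by (rule inner_diff_proj)
  then show ?thesis by simp
qed

lemma proj_eq_0I: "(\<And>k. k \<in> K \<Longrightarrow> inner x k = 0) \<Longrightarrow> P x = 0"
  using proj_eqI[of x 0] proj_fixes[OF subspace_0[OF subspace]] by simp

lemma proj_add: "P (x + y) = P x + P y"
proof -
  have "P (x + y) = P (P x + P y)"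
    by (rule proj_eqI) (simp add: inner_proj inner_add_left)
  then show ?thesis using proj_fixes subspace_add[OF subspace proj_in proj_in] by simp
qed

lemma proj_scaleR: "P (c *\<^sub>R x) = c *\<^sub>R P x"
proof -
  have "P (c *\<^sub>R x) = P (c *\<^sub>R P x)"
    by (rule proj_eqI) (simp add: inner_proj)
  then show ?thesis using proj_fixes subspace_scale[OF subspace proj_in] by simp
qed

lemma proj_diff_proj [simp]: "P (x - P x) = 0"
  by (rule proj_eq_0I) (rule inner_diff_proj)

lemma inner_proj_right: "inner x (P y) = inner (P x) (P y)"
  using inner_proj[OF proj_in, of x y] by (simp add: inner_commute)

lemma inner_proj_left: "inner (P x) y = inner (P x) (P y)"
  using inner_proj_right[of y x] by (simp add: inner_commute)

lemma norm_proj_pythagoras: "(norm x)\<^sup>2 = (norm (P x))\<^sup>2 + (norm (x - P x))\<^sup>2"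
proof -
  have "inner (x - P x) (P x) = 0" using inner_diff_proj proj_in by blast
  then show ?thesis unfolding power2_norm_eq_inner
    by (simp add: inner_diff_left inner_diff_right inner_commute)
qed

lemma norm_proj_le: "norm (P x) \<le> norm x"
  by (rule power2_le_imp_le) (use norm_proj_pythagoras[of x] in simp_all)

lemma norm_diff_proj_le: "norm (x - P x) \<le> norm x"
  by (rule power2_le_imp_le) (use norm_proj_pythagoras[of x] in simp_all)

lemma bounded_linear_proj: "bounded_linear P"
  by (rule bounded_linear_intro[where K=1]) (simp_all add: proj_add proj_scaleR norm_proj_le)

end

section \<open>An orthonormal eigenbasis\<close>

definition nonzero_eigenspaces :: "('a::real_vector \<Rightarrow> 'a) \<Rightarrow> 'a set \<Rightarrow> 'a set" where
  "nonzero_eigenspaces D V = {v \<in> V. \<exists>\<mu>. \<mu> \<noteq> 0 \<and> D v = \<mu> *\<^sub>R v}"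

locale kernel_projection =
  fixes D :: "'a::{real_inner, complete_space} \<Rightarrow> 'a" and domD :: "'a set" and P0 :: "'a \<Rightarrow> 'a"
  assumes self_adjoint: "self_adjoint_op D domD"
    and proj_ker: "is_orth_proj P0 (ker_op D domD)"
begin

abbreviation "K \<equiv> ker_op D domD"

lemma ker_in_dom: "k \<in> K \<Longrightarrow> k \<in> domD" and ker_eq_0: "k \<in> K \<Longrightarrow> D k = 0"
  unfolding ker_op_def by auto

lemma subspace_ker: "subspace K"
  unfolding subspace_def ker_op_def
  using self_adjoint_op_subspace[OF self_adjoint] self_adjoint_op_zero[OF self_adjoint]
    self_adjoint_op_add[OF self_adjoint] self_adjoint_op_scaleR[OF self_adjoint]
  by (simp add: subspace_0 subspace_add subspace_scale)

sublocale orth_proj P0 K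
  by (rule orth_proj.intro[OF proj_ker subspace_ker])

lemma nonzero_eigenspaces_orthogonal_ker:
  assumes v: "v \<in> nonzero_eigenspaces D domD" and k: "k \<in> K"
  shows "inner v k = 0"
proof -
  obtain \<mu> where \<mu>: "\<mu> \<noteq> 0" "D v = \<mu> *\<^sub>R v" "v \<in> domD"
    using v unfolding nonzero_eigenspaces_def by blast
  have "\<mu> * inner v k = inner v (D k)"
    using self_adjoint_op_symmetric[OF self_adjoint \<mu>(3) ker_in_dom[OF k]] \<mu>(2) by simp
  then show ?thesis using \<mu>(1) ker_eq_0[OF k] by simp
qed

end

locale eigenbasis = kernel_projection +
  fixes U :: "'a set"
  assumes orthonormal: "orthonormal U"
    and eigenvectors: "U \<subseteq> nonzero_eigenspaces D domD"
    and complete: "\<And>z. (\<And>k. k \<in> K \<Longrightarrow> inner z k = 0) \<Longrightarrow> (\<And>u. u \<in> U \<Longrightarrow> inner z u = 0) \<Longrightarrow> z = 0"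

locale compact_inverse = kernel_projection +
  fixes T :: "'a \<Rightarrow> 'a"
  assumes T_compact: "compact_op T"
    and T_inverse: "\<And>x. T x \<in> domD \<and> P0 (T x) = 0 \<and> D (T x) = x - P0 x \<and> T (P0 x) = 0"
    and T_left_inverse: "\<And>y. y \<in> domD \<Longrightarrow> P0 y = 0 \<Longrightarrow> T (D y) = y"
begin

lemma bounded_linear_T: "bounded_linear T"
  using T_compact unfolding compact_op_def by blast

lemma inner_T_ker: "k \<in> K \<Longrightarrow> inner (T x) k = 0"
  using inner_diff_proj[of k "T x"] T_inverse[of x] by simp

lemma T_symmetric: "inner (T x) y = inner x (T y)"
proof -
  have "inner (T x) y = inner (T x) (y - P0 y)"
    using inner_T_ker[OF proj_in, of x y] by (simp add: inner_diff_right)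
  also have "\<dots> = inner (D (T x)) (T y)"
    using T_inverse[of y] self_adjoint_op_symmetric[OF self_adjoint, of "T x" "T y"] T_inverse by simp
  also have "\<dots> = inner (x - P0 x) (T y)"
    using T_inverse[of x] by simp
  also have "\<dots> = inner x (T y)"
  proof -
    have "inner (P0 x) (T y) = 0"
      using inner_T_ker[OF proj_in, of y x] by (simp add: inner_commute)
    then show ?thesis by (simp add: inner_diff_left)
  qed
  finally show ?thesis .
qed

lemma eq_0_if_T_eq_0: "(\<And>k. k \<in> K \<Longrightarrow> inner z k = 0) \<Longrightarrow> T z = 0 \<Longrightarrow> z = 0"
  using T_inverse[of z] proj_eq_0I[of z] self_adjoint_op_zero[OF self_adjoint] by simp

lemma eigenvector_in_nonzero_eigenspaces:
  assumes "T v = t *\<^sub>R v" "t \<noteq> 0" "\<And>k. k \<in> K \<Longrightarrow> inner v k = 0"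
  shows "v \<in> nonzero_eigenspaces D domD"
proof -
  interpret T: bounded_linear T by (rule bounded_linear_T)
  have v: "T ((1/t) *\<^sub>R v) = v" using assms(1,2) by (simp add: T.scaleR)
  then have "v \<in> domD" using T_inverse by metis
  moreover have "D v = (1/t) *\<^sub>R v"
    using T_inverse[of "(1/t) *\<^sub>R v"] v proj_eq_0I[OF assms(3)] by (simp add: proj_scaleR)
  moreover have "1/t \<noteq> 0" using assms(2) by simp
  ultimately show ?thesis unfolding nonzero_eigenspaces_def by blast
qed

lemma eigenvalue_on_nonzero_eigenspaces:
  assumes "v \<in> nonzero_eigenspaces D domD"
  shows "\<exists>s. T v = s *\<^sub>R v"
proof -
  interpret T: bounded_linear T by (rule bounded_linear_T)
  obtain \<mu> where \<mu>: "\<mu> \<noteq> 0" "D v = \<mu> *\<^sub>R v" "v \<in> domD"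
    using assms unfolding nonzero_eigenspaces_def by blast
  have "P0 v = 0"
    using proj_eq_0I nonzero_eigenspaces_orthogonal_ker[OF assms] by blast
  then have "\<mu> *\<^sub>R T v = v" using T_left_inverse[OF \<mu>(3)] \<mu>(2) by (simp add: T.scaleR)
  moreover have "T v = (1/\<mu>) *\<^sub>R (\<mu> *\<^sub>R T v)" using \<mu>(1) by simp
  ultimately show ?thesis by metis
qed

text \<open>The vectors orthogonal to the kernel and to \<open>U\<close> form a closed subspace invariant under the
  compact symmetric operator \<open>T\<close>; as \<open>T z \<noteq> 0\<close>, it contains an eigenvector of \<open>T\<close>.\<close>
lemma exists_orthogonal_eigenvector:
  assumes U: "U \<subseteq> nonzero_eigenspaces D domD" and z: "z \<noteq> 0"
    "\<And>k. k \<in> K \<Longrightarrow> inner z k = 0" "\<And>u. u \<in> U \<Longrightarrow> inner z u = 0"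
  shows "\<exists>v\<in>nonzero_eigenspaces D domD. inner v v = 1 \<and> (\<forall>u\<in>U. inner v u = 0)"
proof -
  interpret T: bounded_linear T by (rule bounded_linear_T)
  define W where "W = {x. (\<forall>k\<in>K. inner x k = 0) \<and> (\<forall>u\<in>U. inner x u = 0)}"
  have "W = (\<Inter>k\<in>K. {x. inner x k = 0}) \<inter> (\<Inter>u\<in>U. {x. inner x u = 0})"
    unfolding W_def by auto
  moreover have "closed (\<Inter>k\<in>K. {x. inner x k = 0})" "closed (\<Inter>u\<in>U. {x. inner x u = 0})"
    by (intro closed_INT ballI closed_Collect_eq continuous_intros)+
  ultimately have W_closed: "closed W"
    by auto
  have W_subspace: "subspace W"
    unfolding subspace_def W_def by (simp add: inner_add_left)
  have WT: "T x \<in> W" if "x \<in> W" for x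
  proof -
    have "inner (T x) u = 0" if u: "u \<in> U" for u
    proof -
      obtain s where "T u = s *\<^sub>R u" using eigenvalue_on_nonzero_eigenspaces U u by blast
      then show ?thesis using \<open>x \<in> W\<close> u unfolding W_def by (simp add: T_symmetric)
    qed
    then show ?thesis unfolding W_def using inner_T_ker by blast
  qed
  have cpt: "compact (closure (T ` cball 0 1))"
    using T_compact unfolding compact_op_def by blast
  have "z \<in> W"
    using z unfolding W_def by auto
  moreover have "T z \<noteq> 0"
    using z eq_0_if_T_eq_0 by blast
  ultimately
  obtain w M where w: "w \<in> W" "w \<noteq> 0" "M > 0" "T (T w) = M *\<^sub>R w"
    using compact_symmetric_sq_eigenvector[OF bounded_linear_T cpt T_symmetric W_closed W_subspace WT]
    by blast
  then obtain v t where v: "v \<in> W" "v \<noteq> 0" "t \<noteq> 0" "T v = t *\<^sub>R v"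
    using eigenvector_of_sq_eigenvector[OF T.linear_axioms W_subspace WT w(1,2,4,3)] by blast
  define v' where "v' = (1 / norm v) *\<^sub>R v"
  have "v' \<in> W" unfolding v'_def using v(1) W_subspace subspace_scale by blast
  then have v'K: "\<And>k. k \<in> K \<Longrightarrow> inner v' k = 0" and v'U: "\<forall>u\<in>U. inner v' u = 0"
    unfolding W_def by auto
  have "T v' = t *\<^sub>R v'" unfolding v'_def using v(4) by (simp add: T.scaleR)
  then have "v' \<in> nonzero_eigenspaces D domD"
    using eigenvector_in_nonzero_eigenspaces[OF _ v(3) v'K] by blast
  moreover have "inner v' v' = 1" unfolding v'_def using v(2)
    by (simp add: power2_norm_eq_inner[symmetric] power2_eq_square)
  ultimately show ?thesis using v'U by blast
qed

lemma exists_eigenbasis: "\<exists>U. eigenbasis D domD P0 U"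
proof -
  obtain U where U: "U \<subseteq> nonzero_eigenspaces D domD" "orthonormal U"
    and max: "\<And>U'. orthonormal U' \<Longrightarrow> U' \<subseteq> nonzero_eigenspaces D domD \<Longrightarrow> U \<subseteq> U' \<Longrightarrow> U' = U"
    using exists_maximal_orthonormal_subset[of "nonzero_eigenspaces D domD"] by blast
  have complete: "z = 0" if z: "\<And>k. k \<in> K \<Longrightarrow> inner z k = 0" "\<And>u. u \<in> U \<Longrightarrow> inner z u = 0" for z
  proof (rule ccontr)
    assume "z \<noteq> 0"
    then obtain v where v: "v \<in> nonzero_eigenspaces D domD" "inner v v = 1" "\<forall>u\<in>U. inner v u = 0"
      using exists_orthogonal_eigenvector[OF U(1)] z by blast
    then have "orthonormal (insert v U)"
      using U(2) unfolding orthonormal_def by (auto simp: inner_commute)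
    then have "insert v U = U" using max U(1) v(1) by blast
    then have "v \<in> U" by blast
    then show False using v(2,3) by simp
  qed
  show ?thesis
    using eigenbasis.intro[OF kernel_projection_axioms eigenbasis_axioms.intro[OF U(2,1) complete]]
    by blast
qed

end

lemma essentially_discrete_imp_eigenbasis:
  assumes "self_adjoint_op D V" "is_orth_proj P0 (ker_op D V)" "essentially_discrete D V P0"
  shows "\<exists>U. eigenbasis D V P0 U"
proof -
  have kp: "kernel_projection D V P0"
    using assms(1,2) by (rule kernel_projection.intro)
  have "\<exists>T. compact_inverse D V P0 T"
    using assms(3) kp unfolding essentially_discrete_def compact_inverse_def compact_inverse_axioms_def
    by blast
  then show ?thesis
    using compact_inverse.exists_eigenbasis by blast
qed

context eigenbasis
begin

lemma inner_self_eigenbasis: "u \<in> U \<Longrightarrow> inner u u = 1"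
  using orthonormal unfolding orthonormal_def by blast

lemma eigenbasis_orthogonal_ker: "u \<in> U \<Longrightarrow> k \<in> K \<Longrightarrow> inner u k = 0"
  using eigenvectors nonzero_eigenspaces_orthogonal_ker by blast

lemma inner_proj_eigenbasis: "u \<in> U \<Longrightarrow> inner (P0 x) u = 0"
  using eigenbasis_orthogonal_ker[OF _ proj_in] by (simp add: inner_commute)

definition eigval :: "'a \<Rightarrow> real" where
  "eigval u = inner (D u) u"

lemma eigenvector_eigval:
  assumes "u \<in> U"
  shows "u \<in> domD" "D u = eigval u *\<^sub>R u" "eigval u \<noteq> 0"
proof -
  obtain \<mu> where \<mu>: "\<mu> \<noteq> 0" "D u = \<mu> *\<^sub>R u" "u \<in> domD"
    using assms eigenvectors unfolding nonzero_eigenspaces_def by blast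
  moreover have "eigval u = \<mu>"
    unfolding eigval_def using \<mu> inner_self_eigenbasis[OF assms] by simp
  ultimately show "u \<in> domD" "D u = eigval u *\<^sub>R u" "eigval u \<noteq> 0" by simp_all
qed

lemma eigenbasis_eqI:
  assumes "\<And>k. k \<in> K \<Longrightarrow> inner x k = inner y k" "\<And>u. u \<in> U \<Longrightarrow> inner x u = inner y u"
  shows "x = y"
  using complete[of "x - y"] assms by (simp add: inner_diff_left)

definition eigen_series :: "('a \<Rightarrow> real) \<Rightarrow> 'a" where
  "eigen_series c = (\<Sum>\<^sub>\<infinity>u\<in>U. c u *\<^sub>R u)"

lemma inner_eigen_series:
  "(\<lambda>u. (c u)\<^sup>2) summable_on U \<Longrightarrow> u \<in> U \<Longrightarrow> inner (eigen_series c) u = c u"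
  unfolding eigen_series_def by (rule inner_orthonormal_series[OF orthonormal])

lemma inner_eigen_series_ker:
  "(\<lambda>u. (c u)\<^sup>2) summable_on U \<Longrightarrow> k \<in> K \<Longrightarrow> inner (eigen_series c) k = 0"
  unfolding eigen_series_def
  by (rule inner_orthonormal_series_orthogonal[OF orthonormal]) (use eigenbasis_orthogonal_ker in auto)

lemma eigen_expansion: "x - P0 x = eigen_series (\<lambda>u. inner x u)"
proof (rule eigenbasis_eqI)
  fix k assume "k \<in> K"
  then show "inner (x - P0 x) k = inner (eigen_series (\<lambda>u. inner x u)) k"
    using inner_diff_proj inner_eigen_series_ker[OF bessel_summable[OF orthonormal]] by simp
next
  fix u assume "u \<in> U"
  then show "inner (x - P0 x) u = inner (eigen_series (\<lambda>u. inner x u)) u"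
    using inner_eigen_series[OF bessel_summable[OF orthonormal]] inner_proj_eigenbasis
    by (simp add: inner_diff_left)
qed

lemma parseval: "inner x y = inner (P0 x) (P0 y) + (\<Sum>\<^sub>\<infinity>u\<in>U. inner x u * inner y u)"
proof -
  have "((\<lambda>u. inner y u *\<^sub>R u) has_sum (y - P0 y)) U"
    using orthonormal_series_summable[OF orthonormal bessel_summable[OF orthonormal]] eigen_expansion
    by (simp add: summable_iff_has_sum_infsum eigen_series_def)
  then have "((\<lambda>u. inner x (inner y u *\<^sub>R u)) has_sum inner x (y - P0 y)) U"
    by (rule has_sum_bounded_linear[OF bounded_linear_inner_right])
  then have "(\<Sum>\<^sub>\<infinity>u\<in>U. inner x u * inner y u) = inner x (y - P0 y)"
    by (intro infsumI) (simp add: mult.commute)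
  then show ?thesis
    using inner_proj_right[of x y] by (simp add: inner_diff_right)
qed

lemma parseval_norm: "(norm x)\<^sup>2 = (norm (P0 x))\<^sup>2 + (\<Sum>\<^sub>\<infinity>u\<in>U. (inner x u)\<^sup>2)"
  using parseval[of x x] unfolding power2_norm_eq_inner by (simp add: power2_eq_square)

lemma summable_bounded_coeffs:
  assumes "\<And>u. u \<in> U \<Longrightarrow> \<bar>c u\<bar> \<le> 1"
  shows "(\<lambda>u. (c u * inner x u)\<^sup>2) summable_on U"
proof (rule summable_on_comparison_test[OF bessel_summable[OF orthonormal, of x]])
  fix u assume "u \<in> U"
  then have "(c u)\<^sup>2 * (inner x u)\<^sup>2 \<le> 1 * (inner x u)\<^sup>2"
    using assms power_mono[of "\<bar>c u\<bar>" 1 2] by (intro mult_right_mono) simp_all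
  then show "(c u * inner x u)\<^sup>2 \<le> (inner x u)\<^sup>2"
    by (simp add: power_mult_distrib)
qed simp

lemma diagonal_op_coeffs:
  assumes L: "self_adjoint_op L V" and LK: "\<forall>k\<in>K. k \<in> V \<and> L k = \<gamma> *\<^sub>R k"
    and LU: "\<forall>u\<in>U. u \<in> V \<and> L u = l u *\<^sub>R u" and y: "y \<in> V"
  shows "k \<in> K \<Longrightarrow> inner (L y) k = \<gamma> * inner y k"
    and "u \<in> U \<Longrightarrow> inner (L y) u = l u * inner y u"
  using self_adjoint_op_symmetric[OF L y, of k] self_adjoint_op_symmetric[OF L y, of u] LK LU
  by auto

lemma diagonal_op_apply:
  assumes L: "self_adjoint_op L V" and LK: "\<forall>k\<in>K. k \<in> V \<and> L k = \<gamma> *\<^sub>R k"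
    and LU: "\<forall>u\<in>U. u \<in> V \<and> L u = l u *\<^sub>R u"
    and summable: "(\<lambda>u. (l u * inner y u)\<^sup>2) summable_on U"
  shows "y \<in> V" and "L y = \<gamma> *\<^sub>R P0 y + eigen_series (\<lambda>u. l u * inner y u)"
proof -
  define z where "z = \<gamma> *\<^sub>R P0 y + eigen_series (\<lambda>u. l u * inner y u)"
  have zK: "inner z k = \<gamma> * inner y k" if "k \<in> K" for k
    unfolding z_def using that inner_proj inner_eigen_series_ker[OF summable] by (simp add: inner_add_left)
  have zU: "inner z u = l u * inner y u" if "u \<in> U" for u
    unfolding z_def using that inner_proj_eigenbasis inner_eigen_series[OF summable]
    by (simp add: inner_add_left)
  show yV: "y \<in> V"
  proof (rule self_adjoint_op_domainI[OF L])
    fix w assume w: "w \<in> V"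
    note coeffs = diagonal_op_coeffs[OF L LK LU w]
    have "inner (P0 (L w)) (P0 y) = inner (L w) (P0 y)"
      using inner_proj_right[of "L w" y] by simp
    also have "\<dots> = \<gamma> * inner (P0 w) (P0 y)"
      using coeffs(1)[OF proj_in] inner_proj_right[of w y] by simp
    also have "\<dots> = \<gamma> * inner y (P0 w)"
      using inner_proj_right[of y w] by (simp add: inner_commute)
    also have "\<dots> = inner (P0 w) (P0 z)"
      using zK[OF proj_in] inner_proj_left[of w z] by (simp add: inner_commute)
    finally have "inner (P0 (L w)) (P0 y) = inner (P0 w) (P0 z)" .
    moreover have "(\<Sum>\<^sub>\<infinity>u\<in>U. inner (L w) u * inner y u) = (\<Sum>\<^sub>\<infinity>u\<in>U. inner w u * inner z u)"
      by (rule infsum_cong) (simp add: coeffs(2) zU)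
    ultimately show "inner (L w) y = inner w z"
      using parseval[of "L w" y] parseval[of w z] by simp
  qed
  show "L y = z"
    by (rule eigenbasis_eqI) (simp_all add: diagonal_op_coeffs[OF L LK LU yV] zK zU)
qed

lemma diagonal_op_domain_iff:
  assumes L: "self_adjoint_op L V" and LK: "\<forall>k\<in>K. k \<in> V \<and> L k = \<gamma> *\<^sub>R k"
    and LU: "\<forall>u\<in>U. u \<in> V \<and> L u = l u *\<^sub>R u"
  shows "y \<in> V \<longleftrightarrow> (\<lambda>u. (l u * inner y u)\<^sup>2) summable_on U"
proof
  assume "y \<in> V"
  then show "(\<lambda>u. (l u * inner y u)\<^sup>2) summable_on U"
    using bessel_summable[OF orthonormal, of "L y"] diagonal_op_coeffs(2)[OF L LK LU]
    by (simp cong: summable_on_cong)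
qed (rule diagonal_op_apply[OF L LK LU])

end

section \<open>The operators \<open>|D|\<close> and \<open>\<surd>(I + D\<^sup>2)\<close>\<close>

locale eigenbasis_roots = eigenbasis +
  fixes absD domAbs S domS
  assumes is_abs: "is_abs_op D domD absD domAbs"
    and is_sqrt: "is_sqrt_one_plus_sq D domD S domS"
begin

lemma positive_abs: "positive_self_adjoint_op absD domAbs"
  using is_abs unfolding is_abs_op_def is_pos_sqrt_op_def by blast

lemma self_adjoint_abs: "self_adjoint_op absD domAbs"
  using positive_abs by (rule positive_self_adjoint_op_self_adjoint)

lemma self_adjoint_sqrt: "self_adjoint_op S domS"
  using is_sqrt unfolding is_sqrt_one_plus_sq_def is_pos_sqrt_op_def positive_self_adjoint_op_def
  by blast

lemma sq_on_ker: "k \<in> K \<Longrightarrow> k \<in> dom_sq D domD \<and> D (D k) = 0"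
  using ker_in_dom ker_eq_0 self_adjoint_op_zero[OF self_adjoint]
    subspace_0[OF self_adjoint_op_subspace[OF self_adjoint]]
  unfolding dom_sq_def by simp

lemma sq_on_eigenbasis: "u \<in> U \<Longrightarrow> u \<in> dom_sq D domD \<and> D (D u) = (eigval u)\<^sup>2 *\<^sub>R u"
  using eigenvector_eigval subspace_scale[OF self_adjoint_op_subspace[OF self_adjoint]]
    self_adjoint_op_scaleR[OF self_adjoint]
  unfolding dom_sq_def by (simp add: power2_eq_square)

lemma abs_on_ker: "\<forall>k\<in>K. k \<in> domAbs \<and> absD k = 0 *\<^sub>R k"
  using is_pos_sqrt_op_eigen[OF is_abs[unfolded is_abs_op_def], of _ 0] sq_on_ker by simp

lemma abs_on_eigenbasis: "\<forall>u\<in>U. u \<in> domAbs \<and> absD u = \<bar>eigval u\<bar> *\<^sub>R u"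
proof
  fix u assume "u \<in> U"
  then have dom: "u \<in> dom_sq D domD" and eq: "D (D u) = \<bar>eigval u\<bar>\<^sup>2 *\<^sub>R u"
    using sq_on_eigenbasis by simp_all
  show "u \<in> domAbs \<and> absD u = \<bar>eigval u\<bar> *\<^sub>R u"
    by (rule is_pos_sqrt_op_eigen[OF is_abs[unfolded is_abs_op_def] dom eq]) simp
qed

lemma sqrt_on_ker: "\<forall>k\<in>K. k \<in> domS \<and> S k = 1 *\<^sub>R k"
  using is_pos_sqrt_op_eigen[OF is_sqrt[unfolded is_sqrt_one_plus_sq_def], of _ 1] sq_on_ker by simp

lemma sqrt_on_eigenbasis: "\<forall>u\<in>U. u \<in> domS \<and> S u = sqrt (1 + (eigval u)\<^sup>2) *\<^sub>R u"
proof
  fix u assume "u \<in> U"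
  then have dom: "u \<in> dom_sq D domD" and eq: "u + D (D u) = (sqrt (1 + (eigval u)\<^sup>2))\<^sup>2 *\<^sub>R u"
    using sq_on_eigenbasis by (simp_all add: scaleR_add_left)
  show "u \<in> domS \<and> S u = sqrt (1 + (eigval u)\<^sup>2) *\<^sub>R u"
    by (rule is_pos_sqrt_op_eigen[OF is_sqrt[unfolded is_sqrt_one_plus_sq_def] dom eq]) simp
qed

lemmas abs_coeffs = diagonal_op_coeffs[OF self_adjoint_abs abs_on_ker abs_on_eigenbasis]
lemmas sqrt_coeffs = diagonal_op_coeffs[OF self_adjoint_sqrt sqrt_on_ker sqrt_on_eigenbasis]

lemma dom_sqrt_eq_dom_abs: "domS = domAbs"
proof -
  have "y \<in> domS \<longleftrightarrow> y \<in> domAbs" for y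
  proof -
    have sq: "(sqrt (1 + (eigval u)\<^sup>2) * inner y u)\<^sup>2 = (inner y u)\<^sup>2 + (\<bar>eigval u\<bar> * inner y u)\<^sup>2" for u
      by (simp add: power_mult_distrib algebra_simps)
    have "(\<lambda>u. (sqrt (1 + (eigval u)\<^sup>2) * inner y u)\<^sup>2) summable_on U
        \<longleftrightarrow> (\<lambda>u. (\<bar>eigval u\<bar> * inner y u)\<^sup>2) summable_on U"
    proof
      assume "(\<lambda>u. (sqrt (1 + (eigval u)\<^sup>2) * inner y u)\<^sup>2) summable_on U"
      then show "(\<lambda>u. (\<bar>eigval u\<bar> * inner y u)\<^sup>2) summable_on U"
        by (rule summable_on_comparison_test) (simp_all only: sq zero_le_power2 le_add_same_cancel2)
    next
      assume "(\<lambda>u. (\<bar>eigval u\<bar> * inner y u)\<^sup>2) summable_on U"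
      then show "(\<lambda>u. (sqrt (1 + (eigval u)\<^sup>2) * inner y u)\<^sup>2) summable_on U"
        unfolding sq by (intro summable_on_add bessel_summable[OF orthonormal])
    qed
    then show ?thesis
      using diagonal_op_domain_iff[OF self_adjoint_sqrt sqrt_on_ker sqrt_on_eigenbasis]
        diagonal_op_domain_iff[OF self_adjoint_abs abs_on_ker abs_on_eigenbasis] by blast
  qed
  then show ?thesis by blast
qed

definition sqrt_minus_abs_eigval :: "'a \<Rightarrow> real" where
  "sqrt_minus_abs_eigval u = sqrt (1 + (eigval u)\<^sup>2) - \<bar>eigval u\<bar>"

text \<open>The bounded operator \<open>\<surd>(I + D\<^sup>2) - |D| = (\<surd>(I + D\<^sup>2) + |D|)\<^sup>-\<^sup>1\<close>.\<close>
definition sqrt_minus_abs :: "'a \<Rightarrow> 'a" where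
  "sqrt_minus_abs x = P0 x + eigen_series (\<lambda>u. sqrt_minus_abs_eigval u * inner x u)"

lemma sqrt_minus_abs_eigval_bounds: "0 \<le> sqrt_minus_abs_eigval u" "sqrt_minus_abs_eigval u \<le> 1"
  unfolding sqrt_minus_abs_eigval_def
  by (rule sqrt_one_plus_sq_minus_abs_nonneg sqrt_one_plus_sq_minus_abs_le_1)+

lemma summable_sqrt_minus_abs_coeffs:
  "(\<lambda>u. (sqrt_minus_abs_eigval u * inner x u)\<^sup>2) summable_on U"
  by (rule summable_bounded_coeffs) (use sqrt_minus_abs_eigval_bounds in simp)

lemma inner_sqrt_minus_abs_ker: "k \<in> K \<Longrightarrow> inner (sqrt_minus_abs x) k = inner x k"
  unfolding sqrt_minus_abs_def
  using inner_proj inner_eigen_series_ker[OF summable_sqrt_minus_abs_coeffs]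
  by (simp add: inner_add_left)

lemma inner_sqrt_minus_abs_eigenbasis:
  "u \<in> U \<Longrightarrow> inner (sqrt_minus_abs x) u = sqrt_minus_abs_eigval u * inner x u"
  unfolding sqrt_minus_abs_def
  using inner_proj_eigenbasis inner_eigen_series[OF summable_sqrt_minus_abs_coeffs]
  by (simp add: inner_add_left)

lemma proj_sqrt_minus_abs: "P0 (sqrt_minus_abs x) = P0 x"
  by (rule proj_eqI) (rule inner_sqrt_minus_abs_ker)

lemma norm_sqrt_minus_abs_diff_proj_le:
  assumes c: "\<And>u. u \<in> U \<Longrightarrow> sqrt_minus_abs_eigval u \<le> c" and c0: "0 \<le> c"
  shows "norm (sqrt_minus_abs (x - P0 x)) \<le> c * norm x"
proof -
  let ?y = "x - P0 x"
  have "(norm (sqrt_minus_abs ?y))\<^sup>2 = (\<Sum>\<^sub>\<infinity>u\<in>U. (sqrt_minus_abs_eigval u * inner ?y u)\<^sup>2)"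
    using parseval_norm[of "sqrt_minus_abs ?y"] proj_sqrt_minus_abs[of ?y]
    by (simp add: inner_sqrt_minus_abs_eigenbasis cong: infsum_cong)
  also have "\<dots> \<le> (\<Sum>\<^sub>\<infinity>u\<in>U. c\<^sup>2 * (inner ?y u)\<^sup>2)"
  proof (rule infsum_mono[OF summable_sqrt_minus_abs_coeffs
        summable_on_cmult_right[OF bessel_summable[OF orthonormal]]])
    fix u assume u: "u \<in> U"
    have "(sqrt_minus_abs_eigval u)\<^sup>2 \<le> c\<^sup>2"
      using power_mono[OF c[OF u] sqrt_minus_abs_eigval_bounds(1)] .
    then show "(sqrt_minus_abs_eigval u * inner ?y u)\<^sup>2 \<le> c\<^sup>2 * (inner ?y u)\<^sup>2"
      by (simp add: power_mult_distrib mult_right_mono)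
  qed
  also have "\<dots> = c\<^sup>2 * (norm ?y)\<^sup>2"
    using parseval_norm[of ?y] infsum_cmult_right[OF bessel_summable[OF orthonormal]] by simp
  finally have "(norm (sqrt_minus_abs ?y))\<^sup>2 \<le> (c * norm ?y)\<^sup>2"
    by (simp add: power_mult_distrib)
  then have "norm (sqrt_minus_abs ?y) \<le> c * norm ?y"
    by (rule power2_le_imp_le) (simp add: c0)
  also have "\<dots> \<le> c * norm x"
    using norm_diff_proj_le c0 by (rule mult_left_mono)
  finally show ?thesis .
qed

lemma norm_sqrt_minus_abs_le: "norm (sqrt_minus_abs x) \<le> norm x"
proof -
  have "(norm (sqrt_minus_abs x))\<^sup>2 = (norm (P0 x))\<^sup>2 + (\<Sum>\<^sub>\<infinity>u\<in>U. (sqrt_minus_abs_eigval u * inner x u)\<^sup>2)"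
    using parseval_norm[of "sqrt_minus_abs x"] proj_sqrt_minus_abs[of x]
    by (simp add: inner_sqrt_minus_abs_eigenbasis cong: infsum_cong)
  also have "\<dots> \<le> (norm (P0 x))\<^sup>2 + (\<Sum>\<^sub>\<infinity>u\<in>U. (inner x u)\<^sup>2)"
  proof (intro add_left_mono infsum_mono[OF summable_sqrt_minus_abs_coeffs bessel_summable[OF orthonormal]])
    fix u
    have "(sqrt_minus_abs_eigval u)\<^sup>2 \<le> 1"
      using sqrt_minus_abs_eigval_bounds[of u] by (simp add: power_le_one)
    then show "(sqrt_minus_abs_eigval u * inner x u)\<^sup>2 \<le> (inner x u)\<^sup>2"
      using mult_right_mono[of _ 1 "(inner x u)\<^sup>2"] by (simp add: power_mult_distrib)
  qed
  also have "\<dots> = (norm x)\<^sup>2"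
    by (rule parseval_norm[symmetric])
  finally show ?thesis
    by (rule power2_le_imp_le) simp
qed

lemma bounded_linear_sqrt_minus_abs: "bounded_linear sqrt_minus_abs"
proof (rule bounded_linear_intro[where K=1])
  show "sqrt_minus_abs (x + y) = sqrt_minus_abs x + sqrt_minus_abs y" for x y
    by (rule eigenbasis_eqI)
      (simp_all add: inner_sqrt_minus_abs_ker inner_sqrt_minus_abs_eigenbasis inner_add_left algebra_simps)
  show "sqrt_minus_abs (c *\<^sub>R x) = c *\<^sub>R sqrt_minus_abs x" for c x
    by (rule eigenbasis_eqI) (simp_all add: inner_sqrt_minus_abs_ker inner_sqrt_minus_abs_eigenbasis)
qed (simp add: norm_sqrt_minus_abs_le)

lemma sqrt_minus_abs_diff_proj: "sqrt_minus_abs (x - P0 x) = sqrt_minus_abs x - P0 (sqrt_minus_abs x)"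
  by (rule eigenbasis_eqI)
    (simp_all add: inner_sqrt_minus_abs_ker inner_sqrt_minus_abs_eigenbasis inner_diff_left
      inner_diff_proj inner_proj inner_proj_eigenbasis algebra_simps)

lemma sqrt_eq_abs_plus_sqrt_minus_abs:
  assumes "y \<in> domS"
  shows "S y = absD y + sqrt_minus_abs y"
proof -
  have "y \<in> domAbs" using assms dom_sqrt_eq_dom_abs by simp
  then show ?thesis
    using assms by (intro eigenbasis_eqI) (simp_all add: sqrt_coeffs abs_coeffs inner_add_left
        inner_sqrt_minus_abs_ker inner_sqrt_minus_abs_eigenbasis sqrt_minus_abs_eigval_def algebra_simps)
qed

text \<open>Coefficientwise, \<open>(\<surd>(1 + \<mu>\<^sup>2) + |\<mu>|) (\<surd>(1 + \<mu>\<^sup>2) - |\<mu>|) = 1\<close>.\<close>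
lemma sqrt_minus_abs_right_inverse:
  "sqrt_minus_abs x \<in> domS \<and> S (sqrt_minus_abs x) + absD (sqrt_minus_abs x) = x"
proof
  let ?y = "sqrt_minus_abs x"
  have "(\<lambda>u. (sqrt (1 + (eigval u)\<^sup>2) * inner ?y u)\<^sup>2) summable_on U"
  proof -
    have "\<bar>sqrt (1 + (eigval u)\<^sup>2) * sqrt_minus_abs_eigval u\<bar> \<le> 1" for u
      using sqrt_one_plus_sq_mult_minus_abs_le_1[of "eigval u"] sqrt_minus_abs_eigval_bounds(1)[of u]
      unfolding sqrt_minus_abs_eigval_def by simp
    then show ?thesis
      using summable_bounded_coeffs[of "\<lambda>u. sqrt (1 + (eigval u)\<^sup>2) * sqrt_minus_abs_eigval u" x]
      by (simp add: inner_sqrt_minus_abs_eigenbasis mult.assoc cong: summable_on_cong)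
  qed
  then show dom: "?y \<in> domS"
    using diagonal_op_domain_iff[OF self_adjoint_sqrt sqrt_on_ker sqrt_on_eigenbasis] by blast
  then have "?y \<in> domAbs" using dom_sqrt_eq_dom_abs by simp
  then show "S ?y + absD ?y = x"
    using dom sqrt_one_plus_sq_plus_abs_mult
    by (intro eigenbasis_eqI) (simp_all add: sqrt_coeffs abs_coeffs inner_add_left
        inner_sqrt_minus_abs_ker inner_sqrt_minus_abs_eigenbasis sqrt_minus_abs_eigval_def
        algebra_simps flip: distrib_right)
qed

lemma sqrt_minus_abs_left_inverse:
  assumes "y \<in> domS"
  shows "sqrt_minus_abs (S y + absD y) = y"
proof -
  have "y \<in> domAbs" using assms dom_sqrt_eq_dom_abs by simp
  then show ?thesis
    using assms sqrt_one_plus_sq_plus_abs_mult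
    by (intro eigenbasis_eqI) (simp_all add: sqrt_coeffs abs_coeffs inner_add_left
        inner_sqrt_minus_abs_ker inner_sqrt_minus_abs_eigenbasis sqrt_minus_abs_eigval_def
        algebra_simps flip: distrib_right)
qed

end

section \<open>Commutator estimates\<close>

lemma norm_compression_le_recursive:
  fixes X B H Q :: "'a::real_normed_vector \<Rightarrow> 'a"
  assumes X: "bounded_linear X" and B: "bounded_linear B" and Q: "bounded_linear Q"
    and QQ: "\<And>v. Q (Q v) = Q v" and Qn: "\<And>v. norm (Q v) \<le> norm v"
    and QH: "\<And>v. H (Q v) = Q (H v)" and HQ: "\<And>v. norm (H (Q v)) \<le> h * norm v" and h: "0 \<le> h"
    and fixed_point: "\<And>w. X w = B w - H (X (H w) + B (H w))"
  shows "norm (Q (X (Q w))) \<le> (onorm B + h\<^sup>2 * (onorm (\<lambda>v. Q (X (Q v))) + onorm B)) * norm w"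
proof -
  interpret Q: bounded_linear Q by fact
  define Z where "Z v = Q (X (Q v))" for v
  define N where "N = onorm Z"
  have Z: "bounded_linear Z"
    unfolding Z_def by (intro bounded_linear_compose[OF Q] bounded_linear_compose[OF X] Q)
  have N0: "0 \<le> N" and B0: "0 \<le> onorm B"
    unfolding N_def by (simp_all add: onorm_pos_le Z B)
  define p where "p = H (Q w)"
  have Qp: "Q p = p" unfolding p_def using QH QQ by metis
  have pn: "norm p \<le> h * norm w" unfolding p_def by (rule HQ)
  have "Z w = Q (B (Q w)) - H (Q (Q (X p + B p)))"
    unfolding Z_def p_def using fixed_point[of "Q w"] QH QQ by (simp add: Q.diff)
  then have "norm (Z w) \<le> norm (Q (B (Q w))) + norm (H (Q (Q (X p + B p))))"
    by (simp add: norm_triangle_ineq4)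
  moreover have "norm (Q (B (Q w))) \<le> onorm B * norm w"
    using Qn[of "B (Q w)"] onorm[OF B, of "Q w"] mult_left_mono[OF Qn B0] by (meson order_trans)
  moreover have "norm (H (Q (Q (X p + B p)))) \<le> h * norm (Z p + Q (B p))"
    using HQ[of "Q (X p + B p)"] Qp by (simp add: Z_def Q.add)
  moreover have "norm (Z p + Q (B p)) \<le> (N + onorm B) * (h * norm w)"
  proof -
    have "norm (Z p + Q (B p)) \<le> N * norm p + onorm B * norm p"
      using norm_triangle_ineq[of "Z p" "Q (B p)"] onorm[OF Z, of p] Qn[of "B p"] onorm[OF B, of p]
      unfolding N_def by linarith
    also have "\<dots> \<le> (N + onorm B) * (h * norm w)"
      using pn N0 B0 by (simp add: distrib_right[symmetric] mult_left_mono)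
    finally show ?thesis .
  qed
  then have "h * norm (Z p + Q (B p)) \<le> h * ((N + onorm B) * (h * norm w))"
    using h by (rule mult_left_mono)
  ultimately have "norm (Z w) \<le> onorm B * norm w + h * ((N + onorm B) * (h * norm w))"
    by linarith
  then show ?thesis
    unfolding N_def Z_def[abs_def] by (simp add: power2_eq_square algebra_simps)
qed

text \<open>The recursive bound can be solved for \<open>N = \<parallel>Q X Q\<parallel>\<close> because \<open>N\<close> is finite and \<open>h < 1\<close>.\<close>
lemma norm_compression_le_of_fixed_point:
  fixes X B H Q :: "'a::real_normed_vector \<Rightarrow> 'a"
  assumes X: "bounded_linear X" and B: "bounded_linear B" and Q: "bounded_linear Q"
    and QQ: "\<And>v. Q (Q v) = Q v" and Qn: "\<And>v. norm (Q v) \<le> norm v"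
    and QH: "\<And>v. H (Q v) = Q (H v)" and HQ: "\<And>v. norm (H (Q v)) \<le> h * norm v"
    and h: "0 \<le> h" "h < 1"
    and fixed_point: "\<And>w. X w = B w - H (X (H w) + B (H w))"
  shows "norm (Q (X (Q w))) \<le> (1 + h\<^sup>2) / (1 - h\<^sup>2) * onorm B * norm w"
proof -
  define N where "N = onorm (\<lambda>v. Q (X (Q v)))"
  have Z: "bounded_linear (\<lambda>v. Q (X (Q v)))"
    by (intro bounded_linear_compose[OF Q] bounded_linear_compose[OF X] Q)
  have "N \<le> onorm B + h\<^sup>2 * (N + onorm B)"
    unfolding N_def
    by (intro onorm_bound norm_compression_le_recursive[OF X B Q QQ Qn QH HQ h(1) fixed_point])
      (simp add: onorm_pos_le Z B)
  then have "N * (1 - h\<^sup>2) \<le> onorm B * (1 + h\<^sup>2)"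
    by (simp add: algebra_simps)
  moreover have "0 < 1 - h\<^sup>2"
    using h by (simp add: power_less_one_iff)
  ultimately have "N \<le> (1 + h\<^sup>2) / (1 - h\<^sup>2) * onorm B"
    by (simp add: field_simps)
  then have "N * norm w \<le> (1 + h\<^sup>2) / (1 - h\<^sup>2) * onorm B * norm w"
    by (rule mult_right_mono) simp
  then show ?thesis
    using onorm[OF Z, of w] by (simp add: N_def)
qed

locale sqrt_abs_split =
  fixes S A H :: "'a::real_normed_vector \<Rightarrow> 'a" and V :: "'a set"
  assumes split: "\<And>y. y \<in> V \<Longrightarrow> S y = A y + H y"
    and right_inverse: "\<And>x. H x \<in> V \<and> S (H x) + A (H x) = x"
    and left_inverse: "\<And>y. y \<in> V \<Longrightarrow> H (S y + A y) = y"
    and bounded_linear_H: "bounded_linear H"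
    and norm_H_le: "\<And>x. norm (H x) \<le> norm x"
begin

lemma commutator_split:
  assumes a: "linear a" "\<And>x. x \<in> V \<Longrightarrow> a x \<in> V"
    and B: "\<And>x. x \<in> V \<Longrightarrow> A (a x) - a (A x) = B x" and y: "y \<in> V"
  shows "S (a y) - a (S y) = B y + H (a y) - a (H y)"
proof -
  interpret a: linear a by (fact a(1))
  show ?thesis
    using split[OF a(2)[OF y]] split[OF y] B[OF y] by (simp add: a.add algebra_simps)
qed

lemma norm_commutator_le:
  assumes a: "bounded_linear a" "\<And>x. x \<in> V \<Longrightarrow> a x \<in> V"
    and B: "bounded_linear B" "\<And>x. x \<in> V \<Longrightarrow> A (a x) - a (A x) = B x" and x: "x \<in> V"
  shows "norm (S (a x) - a (S x)) \<le> (onorm B + 2 * onorm a) * norm x"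
proof -
  have "S (a x) - a (S x) = B x + H (a x) - a (H x)"
    using commutator_split[of a B x] bounded_linear.linear[OF a(1)] a(2) B(2) x by blast
  then have "norm (S (a x) - a (S x)) \<le> norm (B x + H (a x)) + norm (a (H x))"
    by (simp add: norm_triangle_ineq4)
  also have "\<dots> \<le> norm (B x) + norm (H (a x)) + norm (a (H x))"
    using norm_triangle_ineq by (rule add_right_mono)
  also have "\<dots> \<le> onorm B * norm x + onorm a * norm x + onorm a * norm x"
  proof -
    have "norm (H (a x)) \<le> onorm a * norm x"
      using norm_H_le[of "a x"] onorm[OF a(1), of x] by linarith
    moreover have "norm (a (H x)) \<le> onorm a * norm x"
      using onorm[OF a(1), of "H x"] mult_left_mono[OF norm_H_le[of x] onorm_pos_le[OF a(1)]]
      by linarith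
    ultimately show ?thesis
      using onorm[OF B(1), of x] by linarith
  qed
  finally show ?thesis
    by (simp add: algebra_simps)
qed

text \<open>Since \<open>H = (S + A)\<^sup>-\<^sup>1\<close>, the commutator \<open>X = [S, a] = B + [H, a]\<close> satisfies
  \<open>[H, a] = - H [S + A, a] H = - H (X + B) H\<close>.\<close>
lemma commutator_resolvent_identity:
  assumes a: "linear a" "\<And>x. x \<in> V \<Longrightarrow> a x \<in> V"
    and B: "\<And>x. x \<in> V \<Longrightarrow> A (a x) - a (A x) = B x"
  defines "X \<equiv> \<lambda>w. B w + H (a w) - a (H w)"
  shows "X w = B w - H (X (H w) + B (H w))"
proof -
  interpret a: linear a by (fact a(1))
  interpret H: bounded_linear H by (fact bounded_linear_H)
  let ?v = "H w"
  have v: "?v \<in> V" "S ?v + A ?v = w" using right_inverse by auto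
  have av: "a ?v \<in> V" using a(2) v(1) .
  have "X ?v + B ?v = (S (a ?v) - a (S ?v)) + (A (a ?v) - a (A ?v))"
    unfolding X_def using commutator_split[OF a B v(1)] B[OF v(1)] by simp
  also have "\<dots> = (S (a ?v) + A (a ?v)) - a w"
    using v(2) by (simp add: a.add[symmetric] algebra_simps)
  finally have "H (X ?v + B ?v) = a ?v - H (a w)"
    using left_inverse[OF av] by (simp add: H.diff)
  then show ?thesis
    unfolding X_def by (simp add: algebra_simps)
qed

lemma norm_compressed_commutator_le:
  assumes a: "bounded_linear a" "\<And>x. x \<in> V \<Longrightarrow> a x \<in> V"
    and B: "bounded_linear B" "\<And>x. x \<in> V \<Longrightarrow> A (a x) - a (A x) = B x"
    and Q: "bounded_linear Q" "\<And>v. Q (Q v) = Q v" "\<And>v. norm (Q v) \<le> norm v"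
    and QH: "\<And>v. H (Q v) = Q (H v)" and HQ: "\<And>v. norm (H (Q v)) \<le> h * norm v"
    and h: "0 \<le> h" "h < 1" and x: "Q x \<in> V"
  shows "norm (Q (S (a (Q x)) - a (S (Q x)))) \<le> (1 + h\<^sup>2) / (1 - h\<^sup>2) * onorm B * norm x"
proof -
  define X where "X w = B w + H (a w) - a (H w)" for w
  have "bounded_linear X"
    unfolding X_def[abs_def]
    by (intro bounded_linear_sub bounded_linear_add B(1) bounded_linear_compose[OF bounded_linear_H a(1)]
        bounded_linear_compose[OF a(1) bounded_linear_H])
  moreover have "X w = B w - H (X (H w) + B (H w))" for w
    unfolding X_def using commutator_resolvent_identity[OF bounded_linear.linear[OF a(1)] a(2) B(2)]
    by simp
  ultimately have "norm (Q (X (Q x))) \<le> (1 + h\<^sup>2) / (1 - h\<^sup>2) * onorm B * norm x"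
    using norm_compression_le_of_fixed_point[OF _ B(1) Q QH HQ h] by blast
  moreover have "S (a (Q x)) - a (S (Q x)) = X (Q x)"
    unfolding X_def using commutator_split[OF bounded_linear.linear[OF a(1)] a(2) B(2) x] .
  ultimately show ?thesis by simp
qed

end

sublocale eigenbasis_roots \<subseteq> sqrt_abs_split S absD sqrt_minus_abs domS
  by (rule sqrt_abs_split.intro[OF sqrt_eq_abs_plus_sqrt_minus_abs sqrt_minus_abs_right_inverse
        sqrt_minus_abs_left_inverse bounded_linear_sqrt_minus_abs norm_sqrt_minus_abs_le])

context eigenbasis_roots
begin

lemma norm_compressed_sqrt_commutator_le:
  assumes a: "bounded_linear a" "\<And>x. x \<in> domS \<Longrightarrow> a x \<in> domS"
    and B: "bounded_linear B" "\<And>x. x \<in> domS \<Longrightarrow> absD (a x) - a (absD x) = B x"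
    and l: "0 < l" "\<And>u. u \<in> U \<Longrightarrow> l \<le> \<bar>eigval u\<bar>" and x: "x - P0 x \<in> domS"
  shows "norm ((S (a (x - P0 x)) - a (S (x - P0 x))) - P0 (S (a (x - P0 x)) - a (S (x - P0 x))))
    \<le> sqrt (1 + 1 / l\<^sup>2) * onorm B * norm x"
proof -
  have contraction: "norm (sqrt_minus_abs (y - P0 y)) \<le> (sqrt (1 + l\<^sup>2) - l) * norm y" for y
    using sqrt_one_plus_sq_minus_abs_antimono[OF l(1)] sqrt_one_plus_sq_minus_abs_nonneg[of l] l
    by (intro norm_sqrt_minus_abs_diff_proj_le) (auto simp: sqrt_minus_abs_eigval_def)
  have nonneg: "0 \<le> sqrt (1 + l\<^sup>2) - l"
    using sqrt_one_plus_sq_minus_abs_nonneg[of l] l(1) by simp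
  have idem: "(v - P0 v) - P0 (v - P0 v) = v - P0 v" for v
    by simp
  show ?thesis
    using norm_compressed_commutator_le[OF a B bounded_linear_sub[OF bounded_linear_ident bounded_linear_proj]
        idem norm_diff_proj_le sqrt_minus_abs_diff_proj contraction nonneg
        sqrt_one_plus_sq_minus_less_1[OF l(1)] x]
    unfolding sqrt_one_plus_sq_minus_ratio[OF l(1)] by blast
qed

end

theorem lemma2p9:
  fixes D :: "'h::{real_inner, complete_space} \<Rightarrow> 'h" and domD :: "'h set"
    and P0 :: "'h \<Rightarrow> 'h"
    and absD :: "'h \<Rightarrow> 'h" and domAbs :: "'h set"
    and S :: "'h \<Rightarrow> 'h" and domS :: "'h set"
    and a :: "'h \<Rightarrow> 'h" and B :: "'h \<Rightarrow> 'h" and lam1 :: real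
  assumes sa: "self_adjoint_op D domD"
    and P0: "is_orth_proj P0 (ker_op D domD)"
    and ess: "essentially_discrete D domD P0"
    and absD: "is_abs_op D domD absD domAbs"
    and S: "is_sqrt_one_plus_sq D domD S domS"
    and a_bdd: "bounded_linear a"
    and a_dom: "\<forall>x\<in>domD. a x \<in> domD"
    and Da_bdd: "\<exists>c. \<forall>x\<in>domD. norm (D (a x) - a (D x)) \<le> c * norm x"
    and a_domAbs: "\<forall>x\<in>domAbs. a x \<in> domAbs"
    and B: "bounded_linear B"
    and B_comm: "\<forall>x\<in>domAbs. absD (a x) - a (absD x) = B x"
    and lam1_eig: "lam1 \<noteq> 0 \<and> (\<exists>x\<in>domAbs. x \<noteq> 0 \<and> absD x = lam1 *\<^sub>R x)"
    and lam1_least: "\<forall>\<mu> x. \<mu> \<noteq> 0 \<and> x \<in> domAbs \<and> x \<noteq> 0 \<and> absD x = \<mu> *\<^sub>R x \<longrightarrow> lam1 \<le> \<mu>"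
  shows "(\<forall>x\<in>domS. a x \<in> domS \<and>
            norm (S (a x) - a (S x)) \<le> (onorm B + 2 * onorm a) * norm x)
       \<and> (\<forall>x. x - P0 x \<in> domS \<longrightarrow>
            (let y = x - P0 x; c = S (a y) - a (S y) in
              norm (c - P0 c) \<le> sqrt (1 + 1 / lam1\<^sup>2) * onorm B * norm x))"
proof -
  obtain U where "eigenbasis D domD P0 U"
    using essentially_discrete_imp_eigenbasis[OF sa P0 ess] by blast
  then interpret eigenbasis_roots D domD P0 U absD domAbs S domS
    using absD S by (intro eigenbasis_roots.intro eigenbasis_roots_axioms.intro)
  have a_domS: "\<And>x. x \<in> domS \<Longrightarrow> a x \<in> domS"
    and B_domS: "\<And>x. x \<in> domS \<Longrightarrow> absD (a x) - a (absD x) = B x"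
    using a_domAbs B_comm by (simp_all add: dom_sqrt_eq_dom_abs)
  obtain v where "v \<in> domAbs" "v \<noteq> 0" "absD v = lam1 *\<^sub>R v"
    using lam1_eig by blast
  then have "0 \<le> lam1"
    by (rule positive_self_adjoint_op_eigenvalue_nonneg[OF positive_abs])
  then have lam1_pos: "0 < lam1"
    using lam1_eig by simp
  have "lam1 \<le> \<bar>eigval u\<bar>" if u: "u \<in> U" for u
  proof -
    have "u \<noteq> 0" using inner_self_eigenbasis[OF u] by auto
    then show ?thesis
      using lam1_least[rule_format, of "\<bar>eigval u\<bar>" u] abs_on_eigenbasis eigenvector_eigval(3)[OF u] u
      by simp
  qed
  then show ?thesis
    using a_domS norm_commutator_le[OF a_bdd a_domS B B_domS]
      norm_compressed_sqrt_commutator_le[OF a_bdd a_domS B B_domS lam1_pos]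
    unfolding Let_def by blast
qed

end
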